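(* Let $s$ be an indeterminate; for an integer $k\ge 0$ put $\{k\}_s=s^k-s^{-k}$ and $\{k\}_s!=\{1\}_s\{2\}_s\cdots\{k\}_s$ (with $\{0\}_s!=1$). For positive integers $m,n$ let \[V_W(m,n)=\sum_{i=0}^{\min(m,n)-1}(-1)^{m+n}s^{-\frac{i^2+3i}{2}}\frac{\{m+i\}_s!\,\{n+i\}_s!\,\{i\}_s!}{\{1\}_s\,\{m-i-1\}_s!\,\{n-i-1\}_s!\,\{2i+1\}_s!}\] (the colored Jones polynomial of the Whitehead link). Let $E_m,E_n,Q_m,Q_n$ act on functions $f(m,n)$ by $(E_mf)(m,n)=f(m+1,n)$, $(E_nf)(m,n)=f(m,n+1)$, $(Q_mf)(m,n)=s^mf(m,n)$, $(Q_nf)(m,n)=s^nf(m,n)$. Then \[A^{\mathrm{bi}}_{s;mn}(W)=(E_n-sQ_n^2)(sQ_m^2E_m-1)-(E_m-sQ_m^2)(sQ_n^2E_n-1)\] satisfies $A^{\mathrm{bi}}_{s;mn}(W)\,V_W=0$.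
   Context: Products of operators are compositions; in particular $E_mQ_m=sQ_mE_m$, $E_nQ_n=sQ_nE_n$, and $E_m$ commutes with $Q_n$ and $E_n$, $E_n$ commutes with $Q_m$. *)

theory Defs
  imports "HOL-Computational_Algebra.Polynomial" "HOL-Computational_Algebra.Fraction_Field"
begin

definition sX :: "rat poly fract" where
  "sX = Fract [:0, 1:] 1"

definition qbr :: "'a::field \<Rightarrow> nat \<Rightarrow> 'a" where
  "qbr s k = s ^ k - inverse (s ^ k)"

definition qfact :: "'a::field \<Rightarrow> nat \<Rightarrow> 'a" where
  "qfact s k = (\<Prod>j\<in>{1..k}. qbr s j)"

definition VW :: "'a::field \<Rightarrow> nat \<Rightarrow> nat \<Rightarrow> 'a" where
  "VW s m n = (\<Sum>i<min m n.
      (-1) ^ (m + n) * s powi (- int ((i^2 + 3*i) div 2)) *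
      (qfact s (m + i) * qfact s (n + i) * qfact s i) /
      (qbr s 1 * qfact s (m - i - 1) * qfact s (n - i - 1) * qfact s (2*i + 1)))"

type_synonym 'a op2 = "(nat \<Rightarrow> nat \<Rightarrow> 'a) \<Rightarrow> (nat \<Rightarrow> nat \<Rightarrow> 'a)"

definition Em :: "'a op2" where "Em f = (\<lambda>m n. f (Suc m) n)"
definition En :: "'a op2" where "En f = (\<lambda>m n. f m (Suc n))"
definition Qm :: "'a::field \<Rightarrow> 'a op2" where "Qm s f = (\<lambda>m n. s ^ m * f m n)"
definition Qn :: "'a::field \<Rightarrow> 'a op2" where "Qn s f = (\<lambda>m n. s ^ n * f m n)"

definition op_sub :: "'a::field op2 \<Rightarrow> 'a op2 \<Rightarrow> 'a op2" where
  "op_sub P R = (\<lambda>f m n. P f m n - R f m n)"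
definition op_smul :: "'a::field \<Rightarrow> 'a op2 \<Rightarrow> 'a op2" where
  "op_smul c P = (\<lambda>f m n. c * P f m n)"

definition Abi :: "'a::field \<Rightarrow> 'a op2" where
  "Abi s = op_sub
     (op_sub En (op_smul s (Qn s \<circ> Qn s)) \<circ> op_sub (op_smul s (Qm s \<circ> Qm s \<circ> Em)) id)
     (op_sub Em (op_smul s (Qm s \<circ> Qm s)) \<circ> op_sub (op_smul s (Qn s \<circ> Qn s \<circ> En)) id)"

end

theory Submission
  imports Defs
begin

text \<open>
  Write \<open>V\<^sub>W(m, n) = (-1)\<^sup>m\<^sup>+\<^sup>n \<Sum>\<^sub>i c\<^sub>i P\<^sub>m(i) P\<^sub>n(i)\<close> with
  \<open>P\<^sub>m(i) = {m+i}!/{m-i-1}!\<close>, which vanishes for \<open>i \<ge> m\<close>, so that the range of summation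
  may be taken as \<open>i \<le> min m n\<close> at all four points \<open>(m, n), \<dots>, (m+1, n+1)\<close> that the operator
  touches. The operator in fact annihilates every summand separately: relative to the common
  factor \<open>{m+i}!/{m-i}!\<close>, the factor \<open>P\<^sub>m(i)\<close> contributes \<open>{m-i}\<close> and \<open>P\<^sub>m\<^sub>+\<^sub>1(i)\<close>
  contributes \<open>{m+i+1}\<close>, and what remains is a Laurent polynomial identity in
  \<open>s, s\<^sup>i, s\<^sup>m\<^sup>-\<^sup>i, s\<^sup>n\<^sup>-\<^sup>i\<close>.
\<close>

lemma Abi_apply:
  "Abi s f m n = (s^(2*m+1) - s^(2*n+1)) * (f (Suc m) (Suc n) - f m n)
     + (s^(2*m+2*n+2) - 1) * (f m (Suc n) - f (Suc m) n)"
proof -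
  have powers: "s^(2*m+1) = s * s^m * s^m" "s^(2*n+1) = s * s^n * s^n"
    "s^(2*m+2*n+2) = s * s^n * s^n * (s * s^m * s^m)"
    unfolding mult_2 power_add by (simp_all add: ac_simps power2_eq_square)
  show ?thesis
    unfolding powers Abi_def op_sub_def op_smul_def Em_def En_def Qm_def Qn_def comp_def id_def
    by (simp add: algebra_simps)
qed

lemma Abi_cong:
  assumes "f m n = g m n" "f (Suc m) n = g (Suc m) n" "f m (Suc n) = g m (Suc n)"
    "f (Suc m) (Suc n) = g (Suc m) (Suc n)"
  shows "Abi s f m n = Abi s g m n"
  using assms by (simp add: Abi_apply)

lemma Abi_sum:
  "Abi s (\<lambda>a b. \<Sum>i\<in>I. c i * h i a b) m n = (\<Sum>i\<in>I. c i * Abi s (h i) m n)"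
  unfolding Abi_apply sum_subtractf[symmetric] sum_distrib_left sum.distrib[symmetric]
  by (intro sum.cong) (simp_all add: algebra_simps)

lemma qfact_Suc: "qfact s (Suc k) = qfact s k * qbr s (Suc k)"
  unfolding qfact_def by simp

lemma qfact_eq_0_iff: "qfact s k = 0 \<longleftrightarrow> (\<exists>j\<in>{1..k}. qbr s j = 0)"
  unfolding qfact_def by simp

definition VW_coeff :: "'a::field \<Rightarrow> nat \<Rightarrow> 'a" where
  "VW_coeff s i = s powi (- int ((i^2 + 3*i) div 2)) * qfact s i / (qbr s 1 * qfact s (2*i + 1))"

definition VW_factor :: "'a::field \<Rightarrow> nat \<Rightarrow> nat \<Rightarrow> 'a" where
  "VW_factor s m i = (if i < m then qfact s (m + i) / qfact s (m - i - 1) else 0)"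

lemma VW_eq_sum:
  assumes "min m n \<le> N"
  shows "VW s m n = (\<Sum>i<N. VW_coeff s i * ((-1)^(m+n) * VW_factor s m i * VW_factor s n i))"
proof -
  have "(\<Sum>i<N. VW_coeff s i * ((-1)^(m+n) * VW_factor s m i * VW_factor s n i))
      = (\<Sum>i<min m n. VW_coeff s i * ((-1)^(m+n) * VW_factor s m i * VW_factor s n i))"
    using assms by (intro sum.mono_neutral_right) (auto simp: VW_factor_def)
  then show ?thesis
    unfolding VW_def
    by (simp add: VW_factor_def VW_coeff_def divide_inverse inverse_mult_distrib ac_simps)
qed

lemma VW_factor_eq_qbr_diff:
  assumes "i \<le> m"
  shows "VW_factor s m i = qfact s (m + i) / qfact s (m - i) * qbr s (m - i)"
proof (cases "i = m")
  case True
  then show ?thesis by (simp add: VW_factor_def qbr_def)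
next
  case False
  with assms have "m - i = Suc (m - i - 1)" by simp
  then have split: "qfact s (m - i) = qfact s (m - i - 1) * qbr s (m - i)"
    by (metis qfact_Suc)
  show ?thesis
  proof (cases "qbr s (m - i) = 0")
    case True
    \<comment> \<open>then \<open>{m-i}\<close> is also a factor of \<open>{m+i}!\<close>, so both sides vanish\<close>
    with False assms have "qfact s (m + i) = 0"
      by (auto simp: qfact_eq_0_iff intro!: bexI[of _ "m - i"])
    then show ?thesis by (simp add: VW_factor_def)
  next
    case False
    with \<open>i \<noteq> m\<close> assms show ?thesis by (simp add: VW_factor_def split)
  qed
qed

lemma VW_factor_Suc_eq_qbr_sum:
  assumes "i \<le> m"
  shows "VW_factor s (Suc m) i = qfact s (m + i) / qfact s (m - i) * qbr s (m + 1 + i)"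
proof -
  have "qfact s (Suc m + i) = qfact s (m + i) * qbr s (m + 1 + i)"
    using qfact_Suc[of s "m + i"] by simp
  moreover have "Suc m - i - 1 = m - i" using assms by simp
  ultimately show ?thesis using assms by (simp add: VW_factor_def)
qed

lemma qbr_Whitehead_identity:
  fixes s :: "'a::field"
  assumes "s \<noteq> 0" and "i \<le> m" "i \<le> n"
  shows "(s^(2*m+1) - s^(2*n+1)) * (qbr s (m+1+i) * qbr s (n+1+i) - qbr s (m-i) * qbr s (n-i))
       + (s^(2*m+2*n+2) - 1) * (qbr s (m+1+i) * qbr s (n-i) - qbr s (m-i) * qbr s (n+1+i)) = 0"
proof -
  obtain p q where pq: "m = i + p" "n = i + q"
    using assms by (metis le_add_diff_inverse)
  have "s ^ i \<noteq> 0" "s ^ p \<noteq> 0" "s ^ q \<noteq> 0"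
    using \<open>s \<noteq> 0\<close> by simp_all
  then show ?thesis
    using \<open>s \<noteq> 0\<close> unfolding pq qbr_def
    by (simp add: power_add power_mult field_simps) algebra
qed

lemma Abi_VW_summand_eq_0:
  fixes s :: "'a::field"
  assumes "s \<noteq> 0" and "i \<le> m" "i \<le> n"
  shows "Abi s (\<lambda>a b. (-1)^(a+b) * VW_factor s a i * VW_factor s b i) m n = 0"
proof -
  define R where "R k = qfact s (k + i) / qfact s (k - i)" for k
  have factors:
    "VW_factor s m i = R m * qbr s (m - i)" "VW_factor s (Suc m) i = R m * qbr s (m + 1 + i)"
    "VW_factor s n i = R n * qbr s (n - i)" "VW_factor s (Suc n) i = R n * qbr s (n + 1 + i)"
    unfolding R_def
    using VW_factor_eq_qbr_diff[OF \<open>i \<le> m\<close>] VW_factor_eq_qbr_diff[OF \<open>i \<le> n\<close>]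
      VW_factor_Suc_eq_qbr_sum[OF \<open>i \<le> m\<close>] VW_factor_Suc_eq_qbr_sum[OF \<open>i \<le> n\<close>]
    by simp_all
  have "Abi s (\<lambda>a b. (-1)^(a+b) * VW_factor s a i * VW_factor s b i) m n
    = (-1)^(m+n) * R m * R n *
      ((s^(2*m+1) - s^(2*n+1)) * (qbr s (m+1+i) * qbr s (n+1+i) - qbr s (m-i) * qbr s (n-i))
       + (s^(2*m+2*n+2) - 1) * (qbr s (m+1+i) * qbr s (n-i) - qbr s (m-i) * qbr s (n+1+i)))"
    unfolding Abi_apply factors by (simp add: algebra_simps)
  also have "\<dots> = 0"
    using qbr_Whitehead_identity[OF assms] by simp
  finally show ?thesis .
qed

theorem Abi_VW_eq_0:
  fixes s :: "'a::field"
  assumes "s \<noteq> 0"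
  shows "Abi s (VW s) m n = 0"
proof -
  define N where "N = Suc (min m n)"
  let ?summand = "\<lambda>i a b. (-1)^(a+b) * VW_factor s a i * VW_factor s b i"
  have "Abi s (VW s) m n = Abi s (\<lambda>a b. \<Sum>i<N. VW_coeff s i * ?summand i a b) m n"
    by (rule Abi_cong; rule VW_eq_sum) (simp_all add: N_def)
  also have "\<dots> = (\<Sum>i<N. VW_coeff s i * Abi s (?summand i) m n)"
    by (rule Abi_sum)
  also have "\<dots> = 0"
    using Abi_VW_summand_eq_0[OF assms] by (simp add: N_def less_Suc_eq_le)
  finally show ?thesis .
qed

lemma sX_neq_0: "sX \<noteq> 0"
  unfolding sX_def Zero_fract_def by (simp add: eq_fract)

theorem mainTheorem2:
  fixes m n :: nat
  assumes "m \<ge> 1" and "n \<ge> 1"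
  shows "Abi sX (VW sX) m n = 0"
  using Abi_VW_eq_0[OF sX_neq_0] .

end
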